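(* Fix $x\in\mathbb X$ and $\Lambda\Subset\mathbb X\setminus\{x\}$, a total order $\preceq$ on $\mathbf F(x)$, and a set $\mathbf E\subset\mathbf F(x)$ with $\mathbf E\supset\{X\in\mathbf F(x)\mid W(X)\neq1,\ X\setminus\{x\}\subset\Lambda\}$. Suppose that $Z(\Lambda)\neq0$ and, unless $z(x)W(x)=0$, assume also $Z_X(\Lambda)\neq0$ for all $X\in\mathbf E$. Then \[ \widehat z(x,\Lambda)=z(x)\prod_{X\in\mathbf F(x):\,X'\subset\Lambda}\big(1+(W(X)-1)R_X(X',\Lambda)\big). \]
   Context: $\mathbb X$ is a finite or countably infinite set, $X\Subset\mathbb X$ means finite subset, $\mathbf F$ is the set of finite subsets of $\mathbb X$. Fix $z:\mathbb X\to\mathbb C$, $W:\mathbf F\to\mathbb C$; $f^X=\prod_{y\in X}f(y)$, $W(x)=W(\{x\})$; singletons $\{x\}$ are written $x$ inside arguments. For an interaction $V:\mathbf F\to\mathbb C$, the conditional interaction is $V(X\mid B)=\prod_{C\subset B}V(X\cup C)$ if $X\cap B=\varnothing$, $V(X\mid B)=0$ if $X=\{y\}$ with $y\in B$, and $V(X\mid B)=1$ otherwise; the Boltzmann factor is $\kappa(X\mid B)=\prod_{\varnothing\neq S\subset X}V(S\mid B)$; partition functions are $Z(X,\Lambda\mid B)=\sum_{Y\subset\Lambda\setminus X}z^{X\cup Y}\kappa(X\cup Y\mid B)$, $Z(\Lambda\mid B)=Z(\varnothing,\Lambda\mid B)$, with $B$ omitted when $B=\varnothing$; correlations $R(X,\Lambda\mid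 B)=Z(X,\Lambda\mid B)/Z(\Lambda\mid B)$ when the denominator is nonzero, and effective activities $\widehat z(y,\Lambda\mid B)=R(\{y\},\Lambda\mid B)$ for $y\notin\Lambda$. Unadorned $\kappa,Z,R,\widehat z$ refer to $V=W$. Let $\mathbf F(x)=\{X\Subset\mathbb X\mid x\in X\}$ and $X'=X\setminus\{x\}$. Given the total order $\preceq$ on $\mathbf F(x)$ (strict part $\prec$) and $X\in\mathbf F(x)$, define $W_X:\mathbf F\to\mathbb C$ by $W_X(Y)=W(Y)W(\{x\}\cup Y)$ if $x\notin Y$ and $\{x\}\cup Y\prec X$; $W_X(Y)=1$ if $x\in Y$ and $Y\neq X$; $W_X(Y)=W(Y)$ otherwise. Quantities built from $V=W_X$ are written $\kappa_X,Z_X,R_X,\widehat z_X$. Convention: a product is set equal to $0$ if at least one factor is well defined and equals $0$, even if other factors are ill-defined. *)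

theory Defs
  imports Complex_Main "HOL-Library.Countable"
begin

text \<open>All quantities below are for empty boundary condition B = {} (the only case used),
  where the conditional interaction V(X|{}) is just V(X).\<close>

definition kappa :: "('a set \<Rightarrow> complex) \<Rightarrow> 'a set \<Rightarrow> complex" where
  "kappa V X = (\<Prod>S\<in>{S. S \<subseteq> X \<and> S \<noteq> {}}. V S)"

definition Zpart :: "('a \<Rightarrow> complex) \<Rightarrow> ('a set \<Rightarrow> complex) \<Rightarrow> 'a set \<Rightarrow> 'a set \<Rightarrow> complex" where
  "Zpart z V X Lam = (\<Sum>Y\<in>Pow (Lam - X). (\<Prod>y\<in>X \<union> Y. z y) * kappa V (X \<union> Y))"

definition Zfun :: "('a \<Rightarrow> complex) \<Rightarrow> ('a set \<Rightarrow> complex) \<Rightarrow> 'a set \<Rightarrow> complex" where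
  "Zfun z V Lam = Zpart z V {} Lam"

text \<open>Correlation R(X,Lambda) = Z(X,Lambda)/Z(Lambda). Since Z(emptyset,Lambda) = Z(Lambda)
  identically, R(emptyset,Lambda) = 1.\<close>
definition Rcorr :: "('a \<Rightarrow> complex) \<Rightarrow> ('a set \<Rightarrow> complex) \<Rightarrow> 'a set \<Rightarrow> 'a set \<Rightarrow> complex" where
  "Rcorr z V X Lam = (if X = {} then 1 else Zpart z V X Lam / Zfun z V Lam)"

definition zhat :: "('a \<Rightarrow> complex) \<Rightarrow> ('a set \<Rightarrow> complex) \<Rightarrow> 'a \<Rightarrow> 'a set \<Rightarrow> complex" where
  "zhat z V y Lam = Rcorr z V {y} Lam"

definition Fx :: "'a \<Rightarrow> 'a set set" where
  "Fx x = {X. finite X \<and> x \<in> X}"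

text \<open>Modified interaction W_X, for the order ord (a relation, (A,B) in ord meaning A precedes-or-equals B).\<close>
definition WX :: "('a set \<Rightarrow> complex) \<Rightarrow> 'a \<Rightarrow> ('a set \<times> 'a set) set \<Rightarrow> 'a set \<Rightarrow> 'a set \<Rightarrow> complex" where
  "WX W x ord X Y =
     (if x \<notin> Y \<and> (insert x Y, X) \<in> ord \<and> insert x Y \<noteq> X then W Y * W (insert x Y)
      else if x \<in> Y \<and> Y \<noteq> X then 1
      else W Y)"

end

theory Submission
  imports Defs
begin

text \<open>
  For Y \<subseteq> \<Lambda>, the Boltzmann factor of {x} \<union> Y is \<kappa>(Y) W(x) times the product of W(X) over the
  X \<in> F(x) with X \<noteq> {x} and X' \<subseteq> Y. Hence Z({x}, \<Lambda>) is z(x) W(x) times a partition function on \<Lambda>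
  in which each such W(X) acts as an extra interaction on X'. Switch these extra interactions on
  one at a time along \<preceq>: once all X \<prec> M are on, the interaction is W_M, and switching on M
  multiplies the partition function Z_M(\<Lambda>) by 1 + (W(M) - 1) R_M(M', \<Lambda>). Telescoping from Z(\<Lambda>)
  gives the product, the factor W(x) being the one for X = {x}.
\<close>

lemma linear_order_on_finite_has_max:
  assumes "linear_order_on D r" "finite A" "A \<noteq> {}" "A \<subseteq> D"
  shows "\<exists>M\<in>A. \<forall>X\<in>A. (X, M) \<in> r"
  using assms(2-4)
proof (induction A rule: finite_ne_induct)
  case (singleton a)
  then show ?case
    using assms(1) by (auto simp: linear_order_on_def partial_order_on_def preorder_on_def refl_on_def)
next
  case (insert a A)
  then obtain M where M: "M \<in> A" "\<forall>X\<in>A. (X, M) \<in> r" by auto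
  have "a \<in> D" "M \<in> D" using insert.prems M(1) by auto
  then have "(a, M) \<in> r \<or> (M, a) \<in> r"
    using assms(1) unfolding linear_order_on_def partial_order_on_def preorder_on_def refl_on_def total_on_def
    by metis
  moreover have "trans r" "(a, a) \<in> r"
    using assms(1) \<open>a \<in> D\<close> by (auto simp: linear_order_on_def partial_order_on_def preorder_on_def refl_on_def)
  ultimately show ?case
    using M by (metis insert_iff transE)
qed

lemma prod_telescope_linear_order:
  fixes g :: "'a set \<Rightarrow> 'b::comm_monoid_mult"
  assumes "linear_order_on D r" "finite F" "F \<subseteq> D"
    and "\<And>M. M \<in> F \<Longrightarrow>
      g (insert M {X \<in> F. (X, M) \<in> r \<and> X \<noteq> M}) = g {X \<in> F. (X, M) \<in> r \<and> X \<noteq> M} * f M"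
  shows "g F = g {} * prod f F"
  using assms(2-4)
proof (induction F rule: finite_psubset_induct)
  case (psubset F)
  have "trans r" "antisym r"
    using assms(1) by (auto simp: linear_order_on_def partial_order_on_def preorder_on_def)
  show ?case
  proof (cases "F = {}")
    case False
    then obtain M where M: "M \<in> F" "\<forall>X\<in>F. (X, M) \<in> r"
      using linear_order_on_finite_has_max[OF assms(1) psubset.hyps False psubset.prems(1)] by blast
    define below where "below N = {X \<in> F. (X, N) \<in> r \<and> X \<noteq> N}" for N
    have F_eq: "F = insert M (below M)" and M_notin: "M \<notin> below M"
      using M by (auto simp: below_def)
    have below_sub: "below M \<subset> F"
      using M(1) by (auto simp: below_def)
    have below_below: "{X \<in> below M. (X, N) \<in> r \<and> X \<noteq> N} = below N" if "N \<in> below M" for N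
      using that \<open>trans r\<close> \<open>antisym r\<close> unfolding below_def by (auto dest: transD antisymD)
    have IH: "g (below M) = g {} * prod f (below M)"
    proof (rule psubset.IH[OF below_sub])
      show "below M \<subseteq> D" using below_sub psubset.prems(1) by blast
      fix N assume "N \<in> below M"
      then show "g (insert N {X \<in> below M. (X, N) \<in> r \<and> X \<noteq> N}) =
          g {X \<in> below M. (X, N) \<in> r \<and> X \<noteq> N} * f N"
        using psubset.prems(2)[of N] below_below[of N] below_sub unfolding below_def by auto
    qed
    have "g (insert M (below M)) = g (below M) * f M"
      using psubset.prems(2)[OF M(1)] unfolding below_def .
    also have "\<dots> = g {} * prod f (insert M (below M))"
      using IH M_notin finite_subset[OF psubset_imp_subset[OF below_sub] psubset.hyps]
      by (simp add: mult_ac)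
    finally show ?thesis
      using F_eq by simp
  qed simp
qed

lemma Fx_subsets_eq_image:
  assumes "finite T" "x \<notin> T"
  shows "{X \<in> Fx x. X - {x} \<subseteq> T} = insert x ` Pow T"
proof (intro equalityI subsetI)
  fix X assume "X \<in> {X \<in> Fx x. X - {x} \<subseteq> T}"
  then have "X = insert x (X - {x})" "X - {x} \<in> Pow T" by (auto simp: Fx_def)
  then show "X \<in> insert x ` Pow T" by blast
qed (use assms finite_subset in \<open>auto simp: Fx_def\<close>)

lemma finite_Fx_subsets: "finite T \<Longrightarrow> finite {X \<in> Fx x. X - {x} \<subseteq> T}"
  by (rule finite_subset[of _ "Pow (insert x T)"]) auto

lemma prod_Fx_subsets:
  assumes "finite T" "x \<notin> T"
  shows "(\<Prod>X\<in>{X \<in> Fx x. X - {x} \<subseteq> T}. h X) = (\<Prod>S\<in>Pow T. h (insert x S))"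
proof -
  have "inj_on (insert x) (Pow T)"
    using assms(2) by (intro inj_onI) (metis PowD insert_ident subsetD)
  then show ?thesis
    unfolding Fx_subsets_eq_image[OF assms] by (simp add: prod.reindex)
qed

lemma kappa_insert:
  assumes "finite T" "x \<notin> T"
  shows "kappa V (insert x T) = kappa V T * (\<Prod>X\<in>{X \<in> Fx x. X - {x} \<subseteq> T}. V X)"
proof -
  have nonempty_subsets: "{S. S \<subseteq> insert x T \<and> S \<noteq> {}} = {S. S \<subseteq> T \<and> S \<noteq> {}} \<union> {X \<in> Fx x. X - {x} \<subseteq> T}"
    using assms finite_subset by (auto simp: Fx_def)
  have "{S. S \<subseteq> T \<and> S \<noteq> {}} \<inter> {X \<in> Fx x. X - {x} \<subseteq> T} = {}"
    using assms(2) by (auto simp: Fx_def)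
  then show ?thesis
    unfolding kappa_def nonempty_subsets using assms(1) by (subst prod.union_disjoint) (auto simp: finite_Fx_subsets)
qed

lemma kappa_WX:
  assumes "finite T" "x \<notin> T"
  shows "kappa (WX W x ord M) T =
    kappa W T * (\<Prod>X | X \<in> Fx x \<and> X - {x} \<subseteq> T \<and> X \<noteq> {x} \<and> (X, M) \<in> ord \<and> X \<noteq> M. W X)"
proof -
  define below where "below X \<longleftrightarrow> X \<noteq> {x} \<and> (X, M) \<in> ord \<and> X \<noteq> M" for X
  have "kappa (WX W x ord M) T =
      (\<Prod>S | S \<subseteq> T \<and> S \<noteq> {}. W S * (if below (insert x S) then W (insert x S) else 1))"
    unfolding kappa_def below_def by (rule prod.cong) (use assms(2) in \<open>auto simp: WX_def\<close>)
  also have "\<dots> = kappa W T * (\<Prod>S\<in>Pow T. if below (insert x S) then W (insert x S) else 1)"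
    unfolding kappa_def prod.distrib
    by (rule arg_cong[where f = "(*) _"], rule prod.mono_neutral_left) (auto simp: assms(1) below_def)
  also have "\<dots> = kappa W T * (\<Prod>X\<in>{X \<in> {X \<in> Fx x. X - {x} \<subseteq> T}. below X}. W X)"
    using assms prod_Fx_subsets[OF assms, of "\<lambda>X. if below X then W X else 1"]
    by (simp add: prod.inter_filter Fx_subsets_eq_image)
  finally show ?thesis unfolding below_def by (simp add: conj_assoc)
qed

lemma Zpart_eq_sum_supersets:
  assumes "finite Lam" "X \<subseteq> Lam"
  shows "Zpart z V X Lam = (\<Sum>Y | X \<subseteq> Y \<and> Y \<subseteq> Lam. (\<Prod>y\<in>Y. z y) * kappa V Y)"
  unfolding Zpart_def
  by (rule sum.reindex_bij_witness[where i = "\<lambda>Y. Y - X" and j = "\<lambda>Y. X \<union> Y"]) (use assms in auto)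

definition Zpinned :: "('a \<Rightarrow> complex) \<Rightarrow> ('a set \<Rightarrow> complex) \<Rightarrow> 'a \<Rightarrow> 'a set set \<Rightarrow> 'a set \<Rightarrow> 'a set \<Rightarrow> complex" where
  "Zpinned z W x A X Lam =
    (\<Sum>Y | X \<subseteq> Y \<and> Y \<subseteq> Lam. (\<Prod>y\<in>Y. z y) * kappa W Y * (\<Prod>T | T \<in> A \<and> T - {x} \<subseteq> Y. W T))"

lemma Zpinned_empty_eq_Zfun: "Zpinned z W x {} {} Lam = Zfun z W Lam"
  by (simp add: Zpinned_def Zfun_def Zpart_def Pow_def)

lemma Zpart_singleton_eq_Zpinned:
  assumes "finite Lam" "x \<notin> Lam"
  shows "Zpart z W {x} Lam = z x * W {x} * Zpinned z W x {X \<in> Fx x. X - {x} \<subseteq> Lam \<and> X \<noteq> {x}} {} Lam"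
proof -
  have "(\<Prod>y\<in>insert x Y. z y) * kappa W (insert x Y) =
      z x * W {x} * ((\<Prod>y\<in>Y. z y) * kappa W Y *
        (\<Prod>T | T \<in> {X \<in> Fx x. X - {x} \<subseteq> Lam \<and> X \<noteq> {x}} \<and> T - {x} \<subseteq> Y. W T))"
    if "Y \<subseteq> Lam" for Y
  proof -
    have Y: "finite Y" "x \<notin> Y" using that assms finite_subset by auto
    have "finite {X \<in> Fx x. X - {x} \<subseteq> Y}" "{x} \<in> {X \<in> Fx x. X - {x} \<subseteq> Y}"
      using Y(1) by (simp add: finite_Fx_subsets, simp add: Fx_def)
    from prod.remove[OF this] have "(\<Prod>X\<in>{X \<in> Fx x. X - {x} \<subseteq> Y}. W X) =
        W {x} * (\<Prod>X | X \<in> Fx x \<and> X - {x} \<subseteq> Y \<and> X \<noteq> {x}. W X)"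
      by (simp add: set_diff_eq conj_assoc)
    moreover have "{T. T \<in> {X \<in> Fx x. X - {x} \<subseteq> Lam \<and> X \<noteq> {x}} \<and> T - {x} \<subseteq> Y} =
        {X. X \<in> Fx x \<and> X - {x} \<subseteq> Y \<and> X \<noteq> {x}}"
      using that by auto
    ultimately show ?thesis
      using Y by (simp add: kappa_insert mult_ac)
  qed
  then show ?thesis
    unfolding Zpart_def Zpinned_def using assms(2)
    by (simp add: sum_distrib_left Pow_def)
qed

lemma Zpinned_insert:
  assumes "finite Lam" "finite A" "M \<notin> A"
  shows "Zpinned z W x (insert M A) {} Lam =
    Zpinned z W x A {} Lam + (W M - 1) * Zpinned z W x A (M - {x}) Lam"
proof -
  define t where "t Y = (\<Prod>y\<in>Y. z y) * kappa W Y * (\<Prod>T | T \<in> A \<and> T - {x} \<subseteq> Y. W T)" for Y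
  have "(\<Prod>T | T \<in> insert M A \<and> T - {x} \<subseteq> Y. W T) =
      (if M - {x} \<subseteq> Y then W M else 1) * (\<Prod>T | T \<in> A \<and> T - {x} \<subseteq> Y. W T)" for Y
  proof -
    have "{T. T \<in> insert M A \<and> T - {x} \<subseteq> Y} =
        (if M - {x} \<subseteq> Y then insert M {T. T \<in> A \<and> T - {x} \<subseteq> Y} else {T. T \<in> A \<and> T - {x} \<subseteq> Y})"
      by auto
    then show ?thesis using assms(2,3) by simp
  qed
  then have "Zpinned z W x (insert M A) {} Lam =
      (\<Sum>Y\<in>Pow Lam. t Y + (W M - 1) * (if M - {x} \<subseteq> Y then t Y else 0))"
    unfolding Zpinned_def t_def Pow_def by (intro sum.cong) (auto simp: algebra_simps)
  also have "\<dots> = (\<Sum>Y\<in>Pow Lam. t Y) + (W M - 1) * (\<Sum>Y\<in>Pow Lam. if M - {x} \<subseteq> Y then t Y else 0)"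
    unfolding sum.distrib sum_distrib_left ..
  also have "(\<Sum>Y\<in>Pow Lam. if M - {x} \<subseteq> Y then t Y else 0) = (\<Sum>Y\<in>{Y \<in> Pow Lam. M - {x} \<subseteq> Y}. t Y)"
    using assms(1) by (intro sum.inter_filter[symmetric]) simp
  also have "{Y \<in> Pow Lam. M - {x} \<subseteq> Y} = {Y. M - {x} \<subseteq> Y \<and> Y \<subseteq> Lam}"
    by auto
  finally show ?thesis
    unfolding Zpinned_def t_def by (simp add: Pow_def)
qed

lemma Zpinned_below_eq_Zpart_WX:
  assumes "finite Lam" "x \<notin> Lam" "X \<subseteq> Lam"
  shows "Zpinned z W x {T \<in> Fx x. T - {x} \<subseteq> Lam \<and> T \<noteq> {x} \<and> (T, M) \<in> ord \<and> T \<noteq> M} X Lam =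
    Zpart z (WX W x ord M) X Lam"
  unfolding Zpinned_def Zpart_eq_sum_supersets[OF assms(1,3)]
proof (intro sum.cong refl)
  fix Y assume "Y \<in> {Y. X \<subseteq> Y \<and> Y \<subseteq> Lam}"
  then have Y: "Y \<subseteq> Lam" "finite Y" "x \<notin> Y"
    using assms(1,2) finite_subset by auto
  have "{T. T \<in> {T \<in> Fx x. T - {x} \<subseteq> Lam \<and> T \<noteq> {x} \<and> (T, M) \<in> ord \<and> T \<noteq> M} \<and> T - {x} \<subseteq> Y} =
      {T. T \<in> Fx x \<and> T - {x} \<subseteq> Y \<and> T \<noteq> {x} \<and> (T, M) \<in> ord \<and> T \<noteq> M}"
    using Y(1) by auto
  then show "(\<Prod>y\<in>Y. z y) * kappa W Y *
      (\<Prod>T | T \<in> {T \<in> Fx x. T - {x} \<subseteq> Lam \<and> T \<noteq> {x} \<and> (T, M) \<in> ord \<and> T \<noteq> M} \<and> T - {x} \<subseteq> Y. W T) =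
    (\<Prod>y\<in>Y. z y) * kappa (WX W x ord M) Y"
    using Y(2,3) by (simp add: kappa_WX mult.assoc)
qed

lemma Zpinned_step:
  assumes "finite Lam" "x \<notin> Lam" "M \<in> Fx x" "M - {x} \<subseteq> Lam" "M \<noteq> {x}"
    and "W M \<noteq> 1 \<Longrightarrow> Zfun z (WX W x ord M) Lam \<noteq> 0"
  defines "below \<equiv> {X \<in> Fx x. X - {x} \<subseteq> Lam \<and> X \<noteq> {x} \<and> (X, M) \<in> ord \<and> X \<noteq> M}"
  shows "Zpinned z W x (insert M below) {} Lam =
    Zpinned z W x below {} Lam * (1 + (W M - 1) * Rcorr z (WX W x ord M) (M - {x}) Lam)"
proof -
  define ZM where "ZM = Zfun z (WX W x ord M) Lam"
  define PM where "PM = Zpart z (WX W x ord M) (M - {x}) Lam"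
  have "below \<subseteq> {X \<in> Fx x. X - {x} \<subseteq> Lam}"
    unfolding below_def by blast
  then have "finite below"
    using finite_Fx_subsets[OF assms(1)] by (rule finite_subset)
  then have "Zpinned z W x (insert M below) {} Lam = ZM + (W M - 1) * PM"
    using assms(1,2,4) by (simp add: Zpinned_insert below_def Zpinned_below_eq_Zpart_WX ZM_def PM_def Zfun_def)
  moreover have "Zpinned z W x below {} Lam = ZM"
    using assms(1,2) by (simp add: below_def Zpinned_below_eq_Zpart_WX ZM_def Zfun_def)
  moreover have "M - {x} \<noteq> {}"
    using assms(3,5) by (auto simp: Fx_def)
  then have "Rcorr z (WX W x ord M) (M - {x}) Lam = PM / ZM"
    by (simp add: Rcorr_def PM_def ZM_def)
  ultimately show ?thesis
    using assms(6) by (cases "W M = 1") (simp_all add: ZM_def[symmetric] field_simps)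
qed

lemma Zpinned_eq_Zfun_prod:
  assumes "finite Lam" "x \<notin> Lam" "linear_order_on (Fx x) ord"
    and "\<And>M. M \<in> Fx x \<Longrightarrow> M - {x} \<subseteq> Lam \<Longrightarrow> W M \<noteq> 1 \<Longrightarrow> Zfun z (WX W x ord M) Lam \<noteq> 0"
  defines "F \<equiv> {X \<in> Fx x. X - {x} \<subseteq> Lam \<and> X \<noteq> {x}}"
  shows "Zpinned z W x F {} Lam =
    Zfun z W Lam * (\<Prod>X\<in>F. 1 + (W X - 1) * Rcorr z (WX W x ord X) (X - {x}) Lam)"
proof -
  have "Zpinned z W x F {} Lam = Zpinned z W x {} {} Lam *
      (\<Prod>X\<in>F. 1 + (W X - 1) * Rcorr z (WX W x ord X) (X - {x}) Lam)"
  proof (rule prod_telescope_linear_order[OF assms(3)])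
    show "F \<subseteq> Fx x"
      unfolding F_def by blast
    show "finite F"
      using finite_Fx_subsets[OF assms(1), of x] unfolding F_def by (rule rev_finite_subset) blast
    fix M assume M: "M \<in> F"
    have "{X \<in> F. (X, M) \<in> ord \<and> X \<noteq> M} =
        {X \<in> Fx x. X - {x} \<subseteq> Lam \<and> X \<noteq> {x} \<and> (X, M) \<in> ord \<and> X \<noteq> M}"
      unfolding F_def by blast
    then show "Zpinned z W x (insert M {X \<in> F. (X, M) \<in> ord \<and> X \<noteq> M}) {} Lam =
        Zpinned z W x {X \<in> F. (X, M) \<in> ord \<and> X \<noteq> M} {} Lam *
        (1 + (W M - 1) * Rcorr z (WX W x ord M) (M - {x}) Lam)"
      using Zpinned_step[OF assms(1,2), of M W z ord] M assms(4)[of M] unfolding F_def by simp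
  qed
  then show ?thesis
    by (simp add: Zpinned_empty_eq_Zfun)
qed

theorem corollary4p3:
  fixes z :: "'a::countable \<Rightarrow> complex"
    and W :: "'a set \<Rightarrow> complex"
    and x :: 'a
    and Lam :: "'a set"
    and ord :: "('a set \<times> 'a set) set"
    and E :: "'a set set"
  assumes Lam_fin: "finite Lam"
    and x_notin: "x \<notin> Lam"
    and ord_dom: "ord \<subseteq> Fx x \<times> Fx x"
    and ord_lin: "linear_order_on (Fx x) ord"
    and E_sub: "E \<subseteq> Fx x"
    and E_sup: "{X \<in> Fx x. W X \<noteq> 1 \<and> X - {x} \<subseteq> Lam} \<subseteq> E"
    and Z_nz: "Zfun z W Lam \<noteq> 0"
    and ZX_nz: "z x * W {x} \<noteq> 0 \<Longrightarrow> \<forall>X\<in>E. Zfun z (WX W x ord X) Lam \<noteq> 0"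
  shows "zhat z W x Lam =
           z x * (\<Prod>X\<in>{X \<in> Fx x. X - {x} \<subseteq> Lam}.
                    1 + (W X - 1) * Rcorr z (WX W x ord X) (X - {x}) Lam)"
proof -
  define F where "F = {X \<in> Fx x. X - {x} \<subseteq> Lam \<and> X \<noteq> {x}}"
  define f where "f X = 1 + (W X - 1) * Rcorr z (WX W x ord X) (X - {x}) Lam" for X
  have "{x} \<in> {X \<in> Fx x. X - {x} \<subseteq> Lam}"
    by (simp add: Fx_def)
  from prod.remove[OF finite_Fx_subsets[OF Lam_fin] this, of f]
  have rhs: "W {x} * prod f F = (\<Prod>X\<in>{X \<in> Fx x. X - {x} \<subseteq> Lam}. f X)"
    by (simp add: f_def Rcorr_def F_def set_diff_eq conj_assoc)
  have lhs: "zhat z W x Lam = z x * W {x} * Zpinned z W x F {} Lam / Zfun z W Lam"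
    using Lam_fin x_notin by (simp add: zhat_def Rcorr_def Zpart_singleton_eq_Zpinned F_def)
  have "zhat z W x Lam = z x * W {x} * prod f F"
  proof (cases "z x * W {x} = 0")
    case False
    have "Zpinned z W x F {} Lam = Zfun z W Lam * prod f F"
      unfolding F_def f_def
    proof (rule Zpinned_eq_Zfun_prod[OF Lam_fin x_notin ord_lin])
      fix M assume "M \<in> Fx x" "M - {x} \<subseteq> Lam" "W M \<noteq> 1"
      then show "Zfun z (WX W x ord M) Lam \<noteq> 0"
        using E_sup ZX_nz[OF False] by blast
    qed
    then show ?thesis
      using lhs Z_nz by simp
  qed (auto simp: lhs)
  then show ?thesis
    using rhs unfolding f_def by (simp add: mult.assoc)
qed

end
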